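(* (i) Any one-vertex ribbon graph with cyclic word $(A\,t\,B\,\bar t\,C)$ is connected, in the category $\mathrm{RI}_S$, to the one with cyclic word $(A\,C\,t\,B\,\bar t)$. (ii) Every connected one-vertex ribbon graph with outer flag set $S$ lies in the same connected component of $\mathrm{RI}_S$ as a one-vertex ribbon graph whose cyclic word is in normal form $$(S_1\,l_1\,S_2\,\bar l_1\,l_2\,S_3\,\bar l_2\cdots l_{b-1}\,S_b\,\bar l_{b-1}\;e_1\bar e_1\cdots e_p\bar e_p\;a_1b_1\bar a_1\bar b_1\cdots a_gb_g\bar a_g\bar b_g),$$ where $S_1,\dots,S_b$ are nonempty words in the outer flags with $S=S_1\sqcup\dots\sqcup S_b$ and $0<|S_1|\le\dots\le|S_b|$, and $l_i,e_j,a_k,b_k$ (with their barred partners) are the loops.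
   Context: A graph $(F,V,\partial,\imath)$ has finite flag set $F$, vertex set $V$, incidence $\partial:F\to V$ and involution $\imath$ whose 2-element orbits are edges and whose fixed points are outer flags. A ribbon graph is a graph with a cyclic order (single-orbit permutation) on each $F_v=\partial^{-1}(v)$. A one-vertex ribbon graph is represented by a cyclic word listing all flags in cyclic order; the two flags of a loop are written $t,\bar t$ (or $l_i,\bar l_i$ etc.), outer flags by other letters; $A,B,C$ denote (possibly empty) words. Contracting a non-loop edge $\{s,t\}$ merges its vertices and deletes $s,t$, the merged vertex receiving the cyclic order $x\mapsto(\rho\tau_{st})^m(x)$, $\rho=\sigma_{\partial s}\sqcup\sigma_{\partial t}$, $m\ge1$ minimal with result not in $\{s,t\}$. $\mathrm{RI}_S$ is the category whose objects are connected ribbon graphs with outer flag set $S$ and whose morphisms are composites of isomorphisms of ribbon graphs (graph isomorphisms transporting the cyclic orders) and contractions of non-loop edges, restricting to the identity on $S$. *)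

theory Defs
  imports Main
begin

text \<open>Ribbon graphs: flag set F, vertex set V, incidence bd, involution inv,
  and a permutation cyc of F whose restriction to each fibre F_v is a cyclic order.
  Values of the functions outside the carriers are irrelevant (all notions below
  only look at the carriers).\<close>

record ('f, 'v) rgraph =
  flags :: "'f set"
  verts :: "'v set"
  bd    :: "'f \<Rightarrow> 'v"
  inv   :: "'f \<Rightarrow> 'f"
  cyc   :: "'f \<Rightarrow> 'f"

definition ribbon_graph :: "('f, 'v) rgraph \<Rightarrow> bool" where
  "ribbon_graph G \<longleftrightarrow>
     finite (flags G) \<and> finite (verts G) \<and>
     (\<forall>f\<in>flags G. bd G f \<in> verts G) \<and>
     (\<forall>f\<in>flags G. inv G f \<in> flags G \<and> inv G (inv G f) = f) \<and>
     bij_betw (cyc G) (flags G) (flags G) \<and>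
     (\<forall>f\<in>flags G. bd G (cyc G f) = bd G f) \<and>
     (\<forall>f\<in>flags G. \<forall>g\<in>flags G. bd G f = bd G g \<longrightarrow> (\<exists>n. (cyc G ^^ n) f = g))"

definition outer_flags :: "('f, 'v) rgraph \<Rightarrow> 'f set" where
  "outer_flags G = {f \<in> flags G. inv G f = f}"

definition is_edge :: "('f, 'v) rgraph \<Rightarrow> 'f \<Rightarrow> 'f \<Rightarrow> bool" where
  "is_edge G s t \<longleftrightarrow> s \<in> flags G \<and> t \<in> flags G \<and> s \<noteq> t \<and> inv G s = t"

definition non_loop_edge :: "('f, 'v) rgraph \<Rightarrow> 'f \<Rightarrow> 'f \<Rightarrow> bool" where
  "non_loop_edge G s t \<longleftrightarrow> is_edge G s t \<and> bd G s \<noteq> bd G t"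

definition adj_rel :: "('f, 'v) rgraph \<Rightarrow> ('v \<times> 'v) set" where
  "adj_rel G = {(bd G s, bd G (inv G s)) | s. s \<in> flags G}"

definition graph_connected :: "('f, 'v) rgraph \<Rightarrow> bool" where
  "graph_connected G \<longleftrightarrow> verts G \<noteq> {} \<and>
     (\<forall>u\<in>verts G. \<forall>w\<in>verts G. (u, w) \<in> (adj_rel G)\<^sup>*)"

definition RI_obj :: "'f set \<Rightarrow> ('f, 'v) rgraph \<Rightarrow> bool" where
  "RI_obj S G \<longleftrightarrow> ribbon_graph G \<and> graph_connected G \<and> outer_flags G = S"

definition rg_iso :: "'f set \<Rightarrow> ('f, 'v) rgraph \<Rightarrow> ('f, 'v) rgraph
                       \<Rightarrow> ('f \<Rightarrow> 'f) \<Rightarrow> ('v \<Rightarrow> 'v) \<Rightarrow> bool" where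
  "rg_iso S G H \<phi> \<psi> \<longleftrightarrow>
     bij_betw \<phi> (flags G) (flags H) \<and> bij_betw \<psi> (verts G) (verts H) \<and>
     (\<forall>f\<in>flags G. bd H (\<phi> f) = \<psi> (bd G f) \<and> inv H (\<phi> f) = \<phi> (inv G f)
                  \<and> cyc H (\<phi> f) = \<phi> (cyc G f)) \<and>
     (\<forall>s\<in>S. \<phi> s = s)"

definition contr_step :: "('f, 'v) rgraph \<Rightarrow> 'f \<Rightarrow> 'f \<Rightarrow> 'f \<Rightarrow> 'f" where
  "contr_step G s t y = cyc G (if y = s then t else if y = t then s else y)"

definition contr_cyc :: "('f, 'v) rgraph \<Rightarrow> 'f \<Rightarrow> 'f \<Rightarrow> 'f \<Rightarrow> 'f" where
  "contr_cyc G s t x =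
     (contr_step G s t ^^ (LEAST m. 1 \<le> m \<and> (contr_step G s t ^^ m) x \<notin> {s, t})) x"

definition is_contraction :: "('f, 'v) rgraph \<Rightarrow> 'f \<Rightarrow> 'f \<Rightarrow> ('f, 'v) rgraph \<Rightarrow> bool" where
  "is_contraction G s t H \<longleftrightarrow> non_loop_edge G s t \<and>
     (\<exists>w. w \<notin> verts G - {bd G s, bd G t} \<and>
        flags H = flags G - {s, t} \<and>
        verts H = (verts G - {bd G s, bd G t}) \<union> {w} \<and>
        (\<forall>f\<in>flags H.
           bd H f = (if bd G f \<in> {bd G s, bd G t} then w else bd G f) \<and>
           inv H f = inv G f \<and>
           cyc H f = (if bd G f \<in> {bd G s, bd G t} then contr_cyc G s t f else cyc G f)))"

text \<open>Generating morphisms of RI_S (composites of these are the morphisms).\<close>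
definition RI_gen :: "'f set \<Rightarrow> ('f, 'v) rgraph \<Rightarrow> ('f, 'v) rgraph \<Rightarrow> bool" where
  "RI_gen S G H \<longleftrightarrow> RI_obj S G \<and> RI_obj S H \<and>
     ((\<exists>\<phi> \<psi>. rg_iso S G H \<phi> \<psi>) \<or> (\<exists>s t. is_contraction G s t H))"

definition RI_connected :: "'f set \<Rightarrow> ('f, 'v) rgraph \<Rightarrow> ('f, 'v) rgraph \<Rightarrow> bool" where
  "RI_connected S G H \<longleftrightarrow> (G, H) \<in> ({(X, Y). RI_gen S X Y} \<union> {(X, Y). RI_gen S Y X})\<^sup>*"

text \<open>One-vertex ribbon graph given by a cyclic word w (a list of distinct flags)
  and the involution iota pairing the two flags of each loop.\<close>
definition cyc_of_word :: "'f list \<Rightarrow> 'f \<Rightarrow> 'f" where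
  "cyc_of_word w x =
     (if x \<in> set w then w ! (Suc (THE i. i < length w \<and> w ! i = x) mod length w) else x)"

definition word_graph :: "'v \<Rightarrow> 'f list \<Rightarrow> ('f \<Rightarrow> 'f) \<Rightarrow> ('f, 'v) rgraph" where
  "word_graph v w \<iota> = \<lparr> flags = set w, verts = {v}, bd = (\<lambda>_. v), inv = \<iota>,
                          cyc = cyc_of_word w \<rparr>"

definition nf_word :: "'f list list \<Rightarrow> ('f \<times> 'f) list \<Rightarrow> ('f \<times> 'f) list
                        \<Rightarrow> ('f \<times> 'f \<times> 'f \<times> 'f) list \<Rightarrow> 'f list" where
  "nf_word Ss ls es gs =
     (case Ss of [] \<Rightarrow> []
        | S1 # rest \<Rightarrow> S1 @ concat (map (\<lambda>((l, lb), Si). l # Si @ [lb]) (zip ls rest)))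
     @ concat (map (\<lambda>(e, eb). [e, eb]) es)
     @ concat (map (\<lambda>(a, b, ab, bb). [a, b, ab, bb]) gs)"

definition is_normal_form :: "'f set \<Rightarrow> 'v \<Rightarrow> ('f, 'v) rgraph \<Rightarrow> bool" where
  "is_normal_form S v H \<longleftrightarrow>
     (\<exists>Ss ls es gs \<iota>.
        length ls = length Ss - 1 \<and>
        (\<forall>Si\<in>set Ss. Si \<noteq> []) \<and>
        sorted (map length Ss) \<and>
        set (concat Ss) = S \<and>
        distinct (nf_word Ss ls es gs) \<and>
        (\<forall>x\<in>set (concat Ss). \<iota> x = x) \<and>
        (\<forall>(l, lb)\<in>set ls. \<iota> l = lb \<and> \<iota> lb = l) \<and>
        (\<forall>(e, eb)\<in>set es. \<iota> e = eb \<and> \<iota> eb = e) \<and>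
        (\<forall>(a, b, ab, bb)\<in>set gs. \<iota> a = ab \<and> \<iota> ab = a \<and> \<iota> b = bb \<and> \<iota> bb = b) \<and>
        H = word_graph v (nf_word Ss ls es gs) \<iota>)"

end

theory Submission
  imports Defs
begin

text \<open>
  Part (i) is a zig-zag of two edge contractions. Cutting the vertex open along a fresh edge
  \<open>{s, s'}\<close> gives a two-vertex graph with cyclic words \<open>s A t\<close> and \<open>s' B t\<^sub>b C\<close>; contracting
  \<open>{s, s'}\<close> returns \<open>A t B t\<^sub>b C\<close>, while contracting \<open>{t, t\<^sub>b}\<close> gives \<open>s A C s' B\<close>, which is
  \<open>A C t B t\<^sub>b\<close> after renaming \<open>s, s'\<close> to \<open>t\<^sub>b, t\<close>.

  For part (ii), rotations together with the move of (i) generate an equivalence of cyclic words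
  that preserves the connected component in \<open>RI\<^sub>S\<close>. Modulo this equivalence, loop blocks
  \<open>t B t\<^sub>b\<close> and handles \<open>a b a\<^sub>b b\<^sub>b\<close> slide freely through the word. By induction on the length,
  peel off an innermost loop \<open>y B y\<^sub>b\<close>: if \<open>B\<close> contains a flag \<open>z\<close> of another loop, then \<open>z\<^sub>b\<close>
  lies outside and the two loops can be rearranged into a handle; otherwise \<open>B\<close> consists of outer
  flags and the loop is inserted as a boundary block at its place in the order of sizes. Finally,
  a one-vertex ribbon graph is isomorphic to the graph of the word listing its flags in cyclic order.
\<close>

section \<open>Cyclic words\<close>

lemma cyc_of_word_nth:
  assumes "distinct w" "i < length w"
  shows "cyc_of_word w (w ! i) = w ! (Suc i mod length w)"
proof -
  have "(THE k. k < length w \<and> w ! k = w ! i) = i"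
    using assms by (auto intro!: the_equality simp: nth_eq_iff_index_eq)
  then show ?thesis using assms by (simp add: cyc_of_word_def)
qed

lemma cyc_of_word_notin: "x \<notin> set w \<Longrightarrow> cyc_of_word w x = x"
  by (simp add: cyc_of_word_def)

lemma cyc_of_word_in_set:
  assumes "distinct w" "x \<in> set w"
  shows "cyc_of_word w x \<in> set w"
proof -
  obtain i where "i < length w" "x = w ! i" using assms(2) by (auto simp: in_set_conv_nth)
  moreover have "Suc i mod length w < length w" using \<open>i < length w\<close> by (intro mod_less_divisor) auto
  ultimately show ?thesis using assms(1) cyc_of_word_nth[of w i] by (metis nth_mem)
qed

lemma cyc_of_word_next:
  assumes "distinct (p @ x # y # q)"
  shows "cyc_of_word (p @ x # y # q) x = y"
  using cyc_of_word_nth[OF assms, of "length p"] by (simp add: nth_append)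

lemma cyc_of_word_last:
  assumes "distinct (y # p @ [x])"
  shows "cyc_of_word (y # p @ [x]) x = y"
  using cyc_of_word_nth[OF assms, of "Suc (length p)"] by (simp add: nth_append)

lemma funpow_cyc_of_word_nth:
  assumes "distinct w" "i < length w"
  shows "(cyc_of_word w ^^ k) (w ! i) = w ! ((i + k) mod length w)"
proof (induction k)
  case (Suc k)
  have "(i + k) mod length w < length w" using assms(2) by (intro mod_less_divisor) auto
  then show ?case
    using Suc cyc_of_word_nth[OF assms(1), of "(i + k) mod length w"] by (simp add: mod_Suc_eq)
qed (use assms in simp)

lemma cyc_of_word_reaches:
  assumes "distinct w" "f \<in> set w" "g \<in> set w"
  shows "\<exists>n. (cyc_of_word w ^^ n) f = g"
proof -
  obtain i j where "i < length w" "f = w ! i" "j < length w" "g = w ! j"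
    using assms(2,3) by (auto simp: in_set_conv_nth)
  moreover have "(i + (j + length w - i)) mod length w = j" using \<open>i < length w\<close> \<open>j < length w\<close> by simp
  ultimately show ?thesis using funpow_cyc_of_word_nth[OF assms(1)] by metis
qed

lemma cyc_of_word_rotate1:
  assumes "distinct w"
  shows "cyc_of_word (rotate1 w) = cyc_of_word w"
proof
  fix x
  show "cyc_of_word (rotate1 w) x = cyc_of_word w x"
  proof (cases "x \<in> set w")
    case True
    then obtain i where i: "i < length w" "x = rotate1 w ! i"
      by (metis in_set_conv_nth length_rotate1 set_rotate1)
    have n: "0 < length w" using i(1) by linarith
    have "cyc_of_word (rotate1 w) x = rotate1 w ! (Suc i mod length w)"
      using cyc_of_word_nth[of "rotate1 w" i] i assms by simp
    also have "\<dots> = w ! (Suc (Suc i mod length w) mod length w)"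
      using n by (simp add: nth_rotate1)
    also have "\<dots> = cyc_of_word w x"
      using i n assms cyc_of_word_nth[of w "Suc i mod length w"] by (simp add: nth_rotate1)
    finally show ?thesis .
  qed (simp add: cyc_of_word_notin)
qed

lemma cyc_of_word_append_swap:
  assumes "distinct (X @ Y)"
  shows "cyc_of_word (Y @ X) = cyc_of_word (X @ Y)"
proof -
  have "cyc_of_word (rotate k w) = cyc_of_word w" if "distinct w" for k and w :: "'a list"
    using that by (induction k) (simp_all add: cyc_of_word_rotate1)
  from this[OF assms, of "length X"] show ?thesis by (simp add: rotate_append)
qed

lemma cyc_of_word_map:
  assumes "distinct w" "inj_on \<phi> (set w)" "x \<in> set w"
  shows "cyc_of_word (map \<phi> w) (\<phi> x) = \<phi> (cyc_of_word w x)"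
proof -
  obtain i where i: "i < length w" "x = w ! i" using assms(3) by (auto simp: in_set_conv_nth)
  have "distinct (map \<phi> w)" using assms by (simp add: distinct_map)
  moreover have "Suc i mod length w < length w" using i(1) by (intro mod_less_divisor) auto
  ultimately show ?thesis using i cyc_of_word_nth[of "map \<phi> w" i] cyc_of_word_nth[OF assms(1) i(1)] by simp
qed

lemma bij_betw_cyc_of_word:
  assumes "distinct w"
  shows "bij_betw (cyc_of_word w) (set w) (set w)"
proof -
  have "y \<in> cyc_of_word w ` set w" if "y \<in> set w" for y
  proof -
    obtain j where j: "j < length w" "y = w ! j" using \<open>y \<in> set w\<close> by (auto simp: in_set_conv_nth)
    define x where "x = (cyc_of_word w ^^ (length w - 1)) y"
    have "Suc (length w - 1) = length w" using j by simp
    then have "cyc_of_word w x = (cyc_of_word w ^^ length w) y" by (metis x_def funpow.simps(2) o_apply)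
    also have "\<dots> = y" using funpow_cyc_of_word_nth[OF assms j(1), of "length w"] j by simp
    finally have "cyc_of_word w x = y" .
    moreover have "x \<in> set w"
      using j by (auto simp: x_def funpow_cyc_of_word_nth[OF assms j(1)] intro!: nth_mem mod_less_divisor)
    ultimately show ?thesis by blast
  qed
  then have "cyc_of_word w ` set w = set w" using cyc_of_word_in_set[OF assms] by blast
  then show ?thesis by (simp add: bij_betw_def eq_card_imp_inj_on)
qed

section \<open>Word graphs in \<open>RI\<^sub>S\<close>\<close>

definition wf_word :: "('f \<Rightarrow> 'f) \<Rightarrow> 'f list \<Rightarrow> bool" where
  "wf_word \<iota> w \<longleftrightarrow> distinct w \<and> (\<forall>x\<in>set w. \<iota> x \<in> set w \<and> \<iota> (\<iota> x) = x)"

definition outer_letters :: "('f \<Rightarrow> 'f) \<Rightarrow> 'f list \<Rightarrow> 'f set" where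
  "outer_letters \<iota> w = {x \<in> set w. \<iota> x = x}"

lemma wf_word_cong: "wf_word \<iota> w \<Longrightarrow> set w' = set w \<Longrightarrow> distinct w' \<Longrightarrow> wf_word \<iota> w'"
  by (simp add: wf_word_def)

lemma wf_word_drop_closed:
  assumes "wf_word \<iota> W" "set W = set W' \<union> set R" "distinct (W' @ R)" "\<forall>x\<in>set R. \<iota> x \<in> set R"
  shows "wf_word \<iota> W'"
proof -
  have "\<iota> x \<in> set W' \<and> \<iota> (\<iota> x) = x" if "x \<in> set W'" for x
  proof -
    have "\<iota> x \<in> set W" "\<iota> (\<iota> x) = x" using assms(1,2) that by (auto simp: wf_word_def)
    moreover have "\<iota> x \<notin> set R" using assms(3,4) that calculation(2) by force
    ultimately show ?thesis using assms(2) by auto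
  qed
  then show ?thesis using assms(3) by (simp add: wf_word_def)
qed

lemma RI_connected_refl: "RI_connected S G G"
  by (simp add: RI_connected_def)

lemma RI_connected_trans: "RI_connected S G H \<Longrightarrow> RI_connected S H K \<Longrightarrow> RI_connected S G K"
  unfolding RI_connected_def by (rule rtrancl_trans)

lemma RI_connected_sym:
  assumes "RI_connected S G H"
  shows "RI_connected S H G"
proof -
  let ?R = "{(X, Y). RI_gen S X Y} \<union> {(X, Y). RI_gen S Y X}"
  have "sym (?R\<^sup>*)" by (rule sym_rtrancl) (auto intro: symI)
  then show ?thesis using assms unfolding RI_connected_def by (rule symD)
qed

lemma RI_connected_gen: "RI_gen S G H \<Longrightarrow> RI_connected S G H"
  by (auto simp: RI_connected_def)

lemma RI_connected_iso:
  "RI_obj S G \<Longrightarrow> RI_obj S H \<Longrightarrow> rg_iso S G H \<phi> \<psi> \<Longrightarrow> RI_connected S G H"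
  by (rule RI_connected_gen) (auto simp: RI_gen_def)

lemma RI_connected_contraction:
  "RI_obj S G \<Longrightarrow> RI_obj S H \<Longrightarrow> is_contraction G s t H \<Longrightarrow> RI_connected S G H"
  by (rule RI_connected_gen) (auto simp: RI_gen_def)

lemma RI_obj_word_graph:
  assumes "wf_word \<iota> w"
  shows "RI_obj (outer_letters \<iota> w) (word_graph v w \<iota>)"
  using assms cyc_of_word_reaches[of w] bij_betw_cyc_of_word[of w]
  by (auto simp: RI_obj_def ribbon_graph_def graph_connected_def outer_flags_def
      word_graph_def wf_word_def outer_letters_def)

lemma word_graph_append_swap:
  "distinct (X @ Y) \<Longrightarrow> word_graph v (Y @ X) \<iota> = word_graph v (X @ Y) \<iota>"
  by (simp add: word_graph_def cyc_of_word_append_swap Un_commute)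

lemma RI_connected_word_graph_rename:
  assumes w: "wf_word \<iota> w" and inj: "inj_on \<phi> (set w)"
    and compat: "\<forall>x\<in>set w. \<iota>' (\<phi> x) = \<phi> (\<iota> x)"
    and fix_outer: "\<forall>x\<in>outer_letters \<iota> w. \<phi> x = x"
  shows "RI_connected (outer_letters \<iota> w) (word_graph v w \<iota>) (word_graph v' (map \<phi> w) \<iota>')"
proof (rule RI_connected_iso)
  have wf': "wf_word \<iota>' (map \<phi> w)"
    using w inj compat by (auto simp: wf_word_def distinct_map)
  have "outer_letters \<iota>' (map \<phi> w) = \<phi> ` outer_letters \<iota> w"
    using w inj compat by (auto simp: outer_letters_def wf_word_def inj_on_eq_iff)
  also have "\<dots> = outer_letters \<iota> w" using fix_outer by force
  finally show "RI_obj (outer_letters \<iota> w) (word_graph v' (map \<phi> w) \<iota>')"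
    using RI_obj_word_graph[OF wf'] by metis
  show "RI_obj (outer_letters \<iota> w) (word_graph v w \<iota>)" using RI_obj_word_graph[OF w] .
  show "rg_iso (outer_letters \<iota> w) (word_graph v w \<iota>) (word_graph v' (map \<phi> w) \<iota>') \<phi> (\<lambda>_. v')"
    using w inj compat fix_outer cyc_of_word_map[of w \<phi>]
    by (auto simp: rg_iso_def word_graph_def wf_word_def inj_on_imp_bij_betw)
qed

section \<open>Two-vertex graphs and the move of part (i)\<close>

lemma contr_cyc_swap: "contr_cyc G s t = contr_cyc G t s"
proof -
  have "contr_step G s t = contr_step G t s" by (auto simp: contr_step_def)
  then show ?thesis by (auto simp: contr_cyc_def insert_commute)
qed

lemma contr_cyc_eq_cyc:
  assumes "f \<notin> {s, t}" "cyc G f \<notin> {s, t}"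
  shows "contr_cyc G s t f = cyc G f"
proof -
  have step: "contr_step G s t f = cyc G f" using assms by (simp add: contr_step_def)
  then have "(LEAST m. 1 \<le> m \<and> (contr_step G s t ^^ m) f \<notin> {s, t}) = 1"
    using assms by (intro Least_equality) auto
  then show ?thesis using step by (simp add: contr_cyc_def)
qed

lemma contr_cyc_skip:
  assumes "f \<notin> {s, t}" "cyc G f = s" "cyc G t \<notin> {s, t}"
  shows "contr_cyc G s t f = cyc G t"
proof -
  have step: "contr_step G s t f = s" using assms by (simp add: contr_step_def)
  have twice: "(contr_step G s t ^^ 2) f = cyc G t"
    using step by (simp add: numeral_2_eq_2 contr_step_def)
  have "(LEAST m. 1 \<le> m \<and> (contr_step G s t ^^ m) f \<notin> {s, t}) = 2"
  proof (rule Least_equality)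
    show "1 \<le> (2::nat) \<and> (contr_step G s t ^^ 2) f \<notin> {s, t}" using twice assms by simp
    fix m assume "1 \<le> m \<and> (contr_step G s t ^^ m) f \<notin> {s, t}"
    then show "2 \<le> m" using step by (cases m; cases "m - 1") auto
  qed
  then show ?thesis using twice by (simp add: contr_cyc_def)
qed

lemma contr_cyc_merge_left:
  assumes d: "distinct (s # P @ s' # Q)" and "Q \<noteq> []"
    and c1: "\<forall>x\<in>set (s # P). cyc K x = cyc_of_word (s # P) x"
    and c2: "\<forall>x\<in>set (s' # Q). cyc K x = cyc_of_word (s' # Q) x"
    and f: "f \<in> set P"
  shows "contr_cyc K s s' f = cyc_of_word (P @ Q) f"
proof -
  obtain q qs where Q: "Q = q # qs" using \<open>Q \<noteq> []\<close> by (cases Q) auto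
  obtain p r where P: "P = p @ f # r" using f by (meson split_list)
  have f_st: "f \<notin> {s, s'}" using d f by auto
  show ?thesis
  proof (cases r)
    case Nil
    have s'_q: "cyc K s' = q" using c2 cyc_of_word_next[of "[]" s' q qs] d Q by auto
    have "cyc K f = s" using c1 cyc_of_word_last[of s p f] d P Nil by auto
    then have "contr_cyc K s s' f = cyc K s'" by (rule contr_cyc_skip[OF f_st]) (use s'_q d Q in auto)
    moreover have "cyc_of_word (P @ Q) f = q" using cyc_of_word_next[of p f q qs] d P Nil Q by auto
    ultimately show ?thesis using s'_q by simp
  next
    case (Cons y r')
    have "cyc K f = y" using c1 cyc_of_word_next[of "s # p" f y r'] d P Cons by auto
    moreover have "y \<notin> {s, s'}" using d P Cons by auto
    ultimately have "contr_cyc K s s' f = y" using contr_cyc_eq_cyc[OF f_st] by auto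
    moreover have "cyc_of_word (P @ Q) f = y" using cyc_of_word_next[of p f y "r' @ Q"] d P Cons by auto
    ultimately show ?thesis by simp
  qed
qed

lemma contr_cyc_merge:
  assumes d: "distinct (s # P @ s' # Q)" and "P \<noteq> []" "Q \<noteq> []"
    and c1: "\<forall>x\<in>set (s # P). cyc K x = cyc_of_word (s # P) x"
    and c2: "\<forall>x\<in>set (s' # Q). cyc K x = cyc_of_word (s' # Q) x"
    and f: "f \<in> set (P @ Q)"
  shows "contr_cyc K s s' f = cyc_of_word (P @ Q) f"
proof (cases "f \<in> set P")
  case True
  then show ?thesis using contr_cyc_merge_left[OF d \<open>Q \<noteq> []\<close> c1 c2] by blast
next
  case False
  have d': "distinct (s' # Q @ s # P)" using d by auto
  have "contr_cyc K s' s f = cyc_of_word (Q @ P) f"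
    using contr_cyc_merge_left[OF d' \<open>P \<noteq> []\<close> c2 c1] False f by auto
  then show ?thesis using d by (simp add: contr_cyc_swap cyc_of_word_append_swap)
qed

definition two_vertex_graph :: "'v \<Rightarrow> 'v \<Rightarrow> 'f list \<Rightarrow> 'f list \<Rightarrow> ('f \<Rightarrow> 'f) \<Rightarrow> ('f, 'v) rgraph" where
  "two_vertex_graph v1 v2 w1 w2 \<iota> = \<lparr> flags = set w1 \<union> set w2, verts = {v1, v2},
     bd = (\<lambda>x. if x \<in> set w1 then v1 else v2), inv = \<iota>,
     cyc = (\<lambda>x. if x \<in> set w1 then cyc_of_word w1 x else cyc_of_word w2 x) \<rparr>"

lemma two_vertex_graph_append_swap:
  "distinct (X1 @ Y1) \<Longrightarrow> distinct (X2 @ Y2) \<Longrightarrow>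
    two_vertex_graph v1 v2 (Y1 @ X1) (Y2 @ X2) \<iota> = two_vertex_graph v1 v2 (X1 @ Y1) (X2 @ Y2) \<iota>"
proof -
  assume "distinct (X1 @ Y1)" "distinct (X2 @ Y2)"
  then have swap1: "cyc_of_word (Y1 @ X1) = cyc_of_word (X1 @ Y1)"
    and swap2: "cyc_of_word (Y2 @ X2) = cyc_of_word (X2 @ Y2)"
    by (simp_all only: cyc_of_word_append_swap)
  show ?thesis unfolding two_vertex_graph_def swap1 swap2 by (simp add: Un_commute)
qed

lemma funpow_eq_on:
  assumes "\<forall>x\<in>X. f x = g x" "\<forall>x\<in>X. g x \<in> X" "x \<in> X"
  shows "(f ^^ n) x = (g ^^ n) x \<and> (g ^^ n) x \<in> X"
  by (induction n) (use assms in auto)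

lemma ribbon_graph_two_vertex_graph:
  assumes w: "wf_word \<iota> (w1 @ w2)" and "v1 \<noteq> v2"
  shows "ribbon_graph (two_vertex_graph v1 v2 w1 w2 \<iota>)"
proof -
  let ?K = "two_vertex_graph v1 v2 w1 w2 \<iota>"
  have d1: "distinct w1" and d2: "distinct w2" and disj: "set w1 \<inter> set w2 = {}"
    and inv: "\<forall>x\<in>set (w1 @ w2). \<iota> x \<in> set (w1 @ w2) \<and> \<iota> (\<iota> x) = x"
    using w by (auto simp: wf_word_def)
  have on1: "\<forall>x\<in>set w1. cyc ?K x = cyc_of_word w1 x"
    and on2: "\<forall>x\<in>set w2. cyc ?K x = cyc_of_word w2 x"
    using disj by (auto simp: two_vertex_graph_def)
  have "bij_betw (cyc ?K) (set w1) (set w1)" "bij_betw (cyc ?K) (set w2) (set w2)"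
    using bij_betw_cong[of _ "cyc ?K"] on1 on2 bij_betw_cyc_of_word[OF d1] bij_betw_cyc_of_word[OF d2]
    by metis+
  then have bij: "bij_betw (cyc ?K) (flags ?K) (flags ?K)"
    using disj by (simp add: bij_betw_combine two_vertex_graph_def)
  have reach: "\<exists>n. (cyc ?K ^^ n) f = g"
    if "distinct w" "\<forall>x\<in>set w. cyc ?K x = cyc_of_word w x" "f \<in> set w" "g \<in> set w" for w f g
    using that cyc_of_word_reaches[of w f g] funpow_eq_on[of "set w" "cyc ?K" "cyc_of_word w" f]
      cyc_of_word_in_set[of w] by metis
  have same_side: "(f \<in> set w1 \<and> g \<in> set w1) \<or> (f \<in> set w2 \<and> g \<in> set w2)"
    if "f \<in> flags ?K" "g \<in> flags ?K" "bd ?K f = bd ?K g" for f g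
    using that \<open>v1 \<noteq> v2\<close> by (auto simp: two_vertex_graph_def split: if_splits)
  have "bd ?K (cyc ?K f) = bd ?K f" if "f \<in> flags ?K" for f
    using that on1 on2 cyc_of_word_in_set[OF d1] cyc_of_word_in_set[OF d2] disj
    by (auto simp: two_vertex_graph_def)
  moreover have "\<exists>n. (cyc ?K ^^ n) f = g"
    if "f \<in> flags ?K" "g \<in> flags ?K" "bd ?K f = bd ?K g" for f g
    using same_side[OF that] reach[OF d1 on1] reach[OF d2 on2] by blast
  ultimately show ?thesis
    unfolding ribbon_graph_def using bij inv by (auto simp: two_vertex_graph_def)
qed

lemma RI_obj_two_vertex_graph:
  assumes w: "wf_word \<iota> (w1 @ w2)" and "v1 \<noteq> v2" and s: "s \<in> set w1" "\<iota> s \<in> set w2"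
  shows "RI_obj (outer_letters \<iota> (w1 @ w2)) (two_vertex_graph v1 v2 w1 w2 \<iota>)"
proof -
  let ?K = "two_vertex_graph v1 v2 w1 w2 \<iota>"
  have "\<iota> s \<notin> set w1" "\<iota> (\<iota> s) = s" using w s by (auto simp: wf_word_def)
  then have "(v1, v2) \<in> adj_rel ?K" "(v2, v1) \<in> adj_rel ?K"
    using s unfolding adj_rel_def two_vertex_graph_def by force+
  then have "graph_connected ?K" by (auto simp: graph_connected_def two_vertex_graph_def)
  moreover have "outer_flags ?K = outer_letters \<iota> (w1 @ w2)"
    by (auto simp: outer_flags_def outer_letters_def two_vertex_graph_def)
  ultimately show ?thesis
    using ribbon_graph_two_vertex_graph[OF w \<open>v1 \<noteq> v2\<close>] by (simp add: RI_obj_def)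
qed

lemma is_contraction_two_vertex_graph:
  assumes d: "distinct (s # P @ s' # Q)" and "P \<noteq> []" "Q \<noteq> []" "v1 \<noteq> v2" "\<iota> s = s'"
    and agree: "\<forall>x\<in>set (P @ Q). \<iota>\<^sub>0 x = \<iota> x"
  shows "is_contraction (two_vertex_graph v1 v2 (s # P) (s' # Q) \<iota>) s s' (word_graph v1 (P @ Q) \<iota>\<^sub>0)"
proof -
  let ?K = "two_vertex_graph v1 v2 (s # P) (s' # Q) \<iota>"
  have "\<forall>x\<in>set (s # P). cyc ?K x = cyc_of_word (s # P) x"
    "\<forall>x\<in>set (s' # Q). cyc ?K x = cyc_of_word (s' # Q) x"
    using d by (auto simp: two_vertex_graph_def)
  then have "contr_cyc ?K s s' f = cyc_of_word (P @ Q) f" if "f \<in> set (P @ Q)" for f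
    using contr_cyc_merge[OF d \<open>P \<noteq> []\<close> \<open>Q \<noteq> []\<close>] that by blast
  moreover have "non_loop_edge ?K s s'"
    using d \<open>v1 \<noteq> v2\<close> \<open>\<iota> s = s'\<close> by (auto simp: non_loop_edge_def is_edge_def two_vertex_graph_def)
  ultimately show ?thesis
    unfolding is_contraction_def using d agree
    by (intro conjI exI[of _ v1]) (auto simp: two_vertex_graph_def word_graph_def)
qed

lemma RI_connected_two_vertex_graph_contraction:
  assumes w: "wf_word \<iota> (x # P @ \<iota> x # Q)" and "\<iota> x \<noteq> x" "P \<noteq> []" "Q \<noteq> []" "v1 \<noteq> v2"
    and w0: "wf_word \<iota>\<^sub>0 (P @ Q)" and agree: "\<forall>y\<in>set (P @ Q). \<iota>\<^sub>0 y = \<iota> y"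
  shows "RI_connected (outer_letters \<iota> (x # P @ \<iota> x # Q))
           (two_vertex_graph v1 v2 (x # P) (\<iota> x # Q) \<iota>) (word_graph v1 (P @ Q) \<iota>\<^sub>0)"
proof (rule RI_connected_contraction)
  show "RI_obj (outer_letters \<iota> (x # P @ \<iota> x # Q)) (two_vertex_graph v1 v2 (x # P) (\<iota> x # Q) \<iota>)"
    using RI_obj_two_vertex_graph[of \<iota> "x # P" "\<iota> x # Q" v1 v2 x] w \<open>v1 \<noteq> v2\<close> by simp
  have "\<iota> (\<iota> x) = x" using w by (simp add: wf_word_def)
  then have "outer_letters \<iota>\<^sub>0 (P @ Q) = outer_letters \<iota> (x # P @ \<iota> x # Q)"
    using \<open>\<iota> x \<noteq> x\<close> agree by (auto simp: outer_letters_def)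
  then show "RI_obj (outer_letters \<iota> (x # P @ \<iota> x # Q)) (word_graph v1 (P @ Q) \<iota>\<^sub>0)"
    using RI_obj_word_graph[OF w0] by simp
  show "is_contraction (two_vertex_graph v1 v2 (x # P) (\<iota> x # Q) \<iota>) x (\<iota> x) (word_graph v1 (P @ Q) \<iota>\<^sub>0)"
    using w \<open>P \<noteq> []\<close> \<open>Q \<noteq> []\<close> \<open>v1 \<noteq> v2\<close> agree
    by (intro is_contraction_two_vertex_graph) (simp_all add: wf_word_def)
qed

lemma wf_word_cut_loop:
  fixes \<iota> :: "'f \<Rightarrow> 'f" and s s' :: 'f
  defines "\<iota>' \<equiv> \<iota>(s := s', s' := s)"
  assumes w: "wf_word \<iota> (A @ [t] @ B @ [tb] @ C)" and "\<iota> t = tb"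
    and fresh: "s \<notin> set (A @ [t] @ B @ [tb] @ C)" "s' \<notin> set (A @ [t] @ B @ [tb] @ C)" "s \<noteq> s'"
  shows "wf_word \<iota>' (s # A @ t # s' # B @ tb # C)"
    and "outer_letters \<iota>' (s # A @ t # s' # B @ tb # C) = outer_letters \<iota> (A @ [t] @ B @ [tb] @ C)"
    and "wf_word \<iota>' (A @ C @ s' # B @ [s])"
    and "outer_letters \<iota>' (A @ C @ s' # B @ [s]) = outer_letters \<iota> (A @ [t] @ B @ [tb] @ C)"
proof -
  let ?W = "A @ [t] @ B @ [tb] @ C" and ?U = "s # A @ t # s' # B @ tb # C" and ?w = "A @ C @ s' # B @ [s]"
  have dW: "distinct ?W" and invW: "\<forall>x\<in>set ?W. \<iota> x \<in> set ?W \<and> \<iota> (\<iota> x) = x"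
    using w by (simp_all add: wf_word_def)
  then have dU: "distinct ?U" using fresh by auto
  show wU: "wf_word \<iota>' ?U" using dW invW fresh by (auto simp: wf_word_def \<iota>'_def)
  show S: "outer_letters \<iota>' ?U = outer_letters \<iota> ?W" using fresh by (auto simp: outer_letters_def \<iota>'_def)
  have "\<iota> tb = t" using invW \<open>\<iota> t = tb\<close> by auto
  then have t: "\<iota>' t = tb" "\<iota>' tb = t" "t \<noteq> tb" using \<open>\<iota> t = tb\<close> dU by (auto simp: \<iota>'_def)
  show "wf_word \<iota>' ?w" by (rule wf_word_drop_closed[OF wU, of _ "[t, tb]"]) (use dU t in auto)
  have "set ?w = set ?U - {t, tb}" using dU by auto
  moreover have "x \<noteq> t" "x \<noteq> tb" if "\<iota>' x = x" for x using that t by metis+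
  ultimately have "outer_letters \<iota>' ?w = outer_letters \<iota>' ?U" unfolding outer_letters_def by blast
  then show "outer_letters \<iota>' ?w = outer_letters \<iota> ?W" using S by simp
qed

lemma RI_connected_loop_move:
  fixes \<iota> :: "'f \<Rightarrow> 'f"
  assumes inf: "infinite (UNIV :: 'f set)" and "v' \<noteq> v"
    and w: "wf_word \<iota> (A @ [t] @ B @ [tb] @ C)" and "\<iota> t = tb"
  shows "RI_connected (outer_letters \<iota> (A @ [t] @ B @ [tb] @ C))
           (word_graph v (A @ [t] @ B @ [tb] @ C) \<iota>) (word_graph v (A @ C @ [t] @ B @ [tb]) \<iota>)"
proof -
  define W where "W = A @ [t] @ B @ [tb] @ C"
  obtain s where s: "s \<notin> set W" using ex_new_if_finite[OF inf] by blast
  obtain s' where s': "s' \<notin> insert s (set W)" using ex_new_if_finite[OF inf] by blast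
  define \<iota>' where "\<iota>' = \<iota>(s := s', s' := s)"
  define U where "U = s # A @ t # s' # B @ tb # C"
  define w2 where "w2 = A @ C @ s' # B @ [s]"
  have "s \<notin> set W" "s' \<notin> set W" "s \<noteq> s'" using s s' by auto
  note cut = wf_word_cut_loop[OF w \<open>\<iota> t = tb\<close> this[unfolded W_def], folded \<iota>'_def U_def w2_def W_def]
  have dU: "distinct U" using cut(1) by (simp add: wf_word_def)
  have "\<iota>' t = tb" "\<iota>' s = s'" using \<open>\<iota> t = tb\<close> s s' by (auto simp: \<iota>'_def W_def)
  have "\<iota> tb = t" using w \<open>\<iota> t = tb\<close> by (auto simp: wf_word_def)
  define K where "K = two_vertex_graph v v' (s # A @ [t]) (s' # B @ tb # C) \<iota>'"
  have "RI_connected (outer_letters \<iota>' (s # (A @ [t]) @ \<iota>' s # (B @ tb # C)))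
      (two_vertex_graph v v' (s # A @ [t]) (\<iota>' s # B @ tb # C) \<iota>') (word_graph v ((A @ [t]) @ (B @ tb # C)) \<iota>)"
    by (rule RI_connected_two_vertex_graph_contraction)
      (use cut(1) w s s' \<open>\<iota>' s = s'\<close> \<open>v' \<noteq> v\<close> in \<open>auto simp: \<iota>'_def U_def W_def\<close>)
  then have K_W: "RI_connected (outer_letters \<iota> W) K (word_graph v W \<iota>)"
    using \<open>\<iota>' s = s'\<close> cut(2) by (simp add: K_def U_def W_def)
  have "distinct ((s # A) @ [t])" "distinct ((s' # B) @ (tb # C))" using dU by (auto simp: U_def)
  from two_vertex_graph_append_swap[OF this, of v v' \<iota>']
  have K_rotated: "K = two_vertex_graph v v' (t # s # A) (tb # C @ s' # B) \<iota>'" by (simp add: K_def)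
  have contract_t: "RI_connected (outer_letters \<iota>' (t # (s # A) @ tb # (C @ s' # B)))
      (two_vertex_graph v v' (t # s # A) (tb # C @ s' # B) \<iota>') (word_graph v ((s # A) @ (C @ s' # B)) \<iota>')"
  proof (rule RI_connected_two_vertex_graph_contraction[of \<iota>' t, unfolded \<open>\<iota>' t = tb\<close>])
    show "wf_word \<iota>' (t # (s # A) @ tb # C @ s' # B)"
      by (rule wf_word_cong[OF cut(1)]) (use dU in \<open>auto simp: U_def\<close>)
    show "wf_word \<iota>' ((s # A) @ C @ s' # B)"
      by (rule wf_word_cong[OF cut(3)]) (use dU in \<open>auto simp: U_def w2_def\<close>)
  qed (use \<open>v' \<noteq> v\<close> dU in \<open>auto simp: U_def\<close>)
  have "set (t # (s # A) @ tb # (C @ s' # B)) = set U" by (auto simp: U_def)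
  then have outer_t: "outer_letters \<iota>' (t # (s # A) @ tb # (C @ s' # B)) = outer_letters \<iota> W"
    using cut(2) by (simp add: outer_letters_def)
  have "distinct ([s] @ A @ C @ s' # B)" using dU by (auto simp: U_def)
  from word_graph_append_swap[OF this, of v \<iota>']
  have "word_graph v ((s # A) @ (C @ s' # B)) \<iota>' = word_graph v w2 \<iota>'" by (simp add: w2_def)
  then have K_w2: "RI_connected (outer_letters \<iota> W) K (word_graph v w2 \<iota>')"
    using contract_t outer_t unfolding K_rotated by simp
  define \<phi> where "\<phi> = id(s := tb, s' := t)"
  have "RI_connected (outer_letters \<iota>' w2) (word_graph v w2 \<iota>') (word_graph v (map \<phi> w2) \<iota>)"
    using dU w \<open>\<iota> t = tb\<close> \<open>\<iota> tb = t\<close> s s' unfolding wf_word_def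
    by (intro RI_connected_word_graph_rename[OF cut(3)])
      (auto simp: inj_on_def w2_def \<phi>_def \<iota>'_def U_def W_def outer_letters_def)
  moreover have "map \<phi> w2 = A @ C @ [t] @ B @ [tb]" using dU by (simp add: U_def w2_def \<phi>_def)
  ultimately have "RI_connected (outer_letters \<iota> W) (word_graph v w2 \<iota>') (word_graph v (A @ C @ [t] @ B @ [tb]) \<iota>)"
    using cut(4) by simp
  from RI_connected_trans[OF RI_connected_trans[OF RI_connected_sym[OF K_W] K_w2] this]
  show ?thesis by (simp only: W_def)
qed

section \<open>Moves on cyclic words\<close>

inductive word_equiv :: "('f \<Rightarrow> 'f) \<Rightarrow> 'f list \<Rightarrow> 'f list \<Rightarrow> bool" for \<iota> where
  sym: "word_equiv \<iota> w w' \<Longrightarrow> word_equiv \<iota> w' w"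
| trans: "word_equiv \<iota> w w' \<Longrightarrow> word_equiv \<iota> w' w'' \<Longrightarrow> word_equiv \<iota> w w''"
| rotate: "word_equiv \<iota> (X @ Y) (Y @ X)"
| loop_move: "\<iota> t = tb \<Longrightarrow> word_equiv \<iota> (A @ [t] @ B @ [tb] @ C) (A @ C @ [t] @ B @ [tb])"

lemmas [trans] = word_equiv.trans

lemma word_equiv_set_length_distinct:
  "word_equiv \<iota> w w' \<Longrightarrow> set w = set w' \<and> length w = length w' \<and> (distinct w \<longleftrightarrow> distinct w')"
  by (induction rule: word_equiv.induct) auto

lemma word_equiv_rotateI: "w = X @ Y \<Longrightarrow> w' = Y @ X \<Longrightarrow> word_equiv \<iota> w w'"
  using word_equiv.rotate by blast

lemma word_equiv_refl: "word_equiv \<iota> w w"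
  by (rule word_equiv_rotateI[of _ "[]" w]) simp_all

lemma RI_connected_word_equiv:
  assumes inf: "infinite (UNIV :: 'f set)" and "v' \<noteq> v"
  shows "word_equiv \<iota> w w' \<Longrightarrow> wf_word \<iota> w \<Longrightarrow>
    RI_connected (outer_letters \<iota> w) (word_graph v w \<iota>) (word_graph v w' (\<iota> :: 'f \<Rightarrow> 'f))"
proof (induction rule: word_equiv.induct)
  case (sym w w')
  have "set w = set w'" "distinct w = distinct w'" using word_equiv_set_length_distinct[OF sym.hyps] by auto
  then have "wf_word \<iota> w" "outer_letters \<iota> w = outer_letters \<iota> w'"
    using sym.prems by (simp_all add: wf_word_def outer_letters_def)
  then show ?case using RI_connected_sym[OF sym.IH] by simp
next
  case (trans w w' w'')
  have "set w = set w'" "distinct w = distinct w'"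
    using word_equiv_set_length_distinct[OF trans.hyps(1)] by auto
  then have "wf_word \<iota> w'" "outer_letters \<iota> w = outer_letters \<iota> w'"
    using trans.prems by (simp_all add: wf_word_def outer_letters_def)
  then show ?case using RI_connected_trans trans.IH trans.prems by metis
next
  case (rotate X Y)
  then show ?case using word_graph_append_swap[of X Y v \<iota>] RI_connected_refl
    by (simp add: wf_word_def)
next
  case (loop_move t tb A B C)
  then show ?case using RI_connected_loop_move[OF inf \<open>v' \<noteq> v\<close>] by simp
qed

lemma word_equiv_swap_after_loop:
  assumes "\<iota> t = tb"
  shows "word_equiv \<iota> (t # B @ tb # D1 @ D2) (t # B @ tb # D2 @ D1)"
proof -
  have "word_equiv \<iota> (t # B @ tb # D1 @ D2) (D2 @ [t] @ B @ [tb] @ D1)"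
    by (rule word_equiv_rotateI[where X="t # B @ tb # D1" and Y=D2]) auto
  also have "word_equiv \<iota> \<dots> (D2 @ D1 @ [t] @ B @ [tb])" by (rule word_equiv.loop_move) (rule assms)
  also have "word_equiv \<iota> \<dots> (t # B @ tb # D2 @ D1)"
    by (rule word_equiv_rotateI[where X="D2 @ D1" and Y="t # B @ [tb]"]) auto
  finally show ?thesis .
qed

lemma word_equiv_swap_inside_loop:
  assumes "\<iota> tb = t"
  shows "word_equiv \<iota> (t # B1 @ B2 @ tb # D) (t # B2 @ B1 @ tb # D)"
proof -
  have "word_equiv \<iota> (t # B1 @ B2 @ tb # D) (tb # D @ t # B1 @ B2)"
    by (rule word_equiv_rotateI[where X="t # B1 @ B2" and Y="tb # D"]) auto
  also have "word_equiv \<iota> \<dots> (tb # D @ t # B2 @ B1)"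
    using word_equiv_swap_after_loop[of \<iota> tb t D B1 B2] assms by simp
  also have "word_equiv \<iota> \<dots> (t # B2 @ B1 @ tb # D)"
    by (rule word_equiv_rotateI[where X="tb # D" and Y="t # B2 @ B1"]) auto
  finally show ?thesis .
qed

lemma word_equiv_slide_loop:
  assumes "\<iota> t = tb"
  shows "word_equiv \<iota> (X @ (t # B @ [tb]) @ Y @ Z) (X @ Y @ (t # B @ [tb]) @ Z)"
proof -
  have "word_equiv \<iota> (X @ (t # B @ [tb]) @ Y @ Z) (t # B @ tb # Y @ Z @ X)"
    by (rule word_equiv_rotateI[where X=X and Y="t # B @ tb # Y @ Z"]) auto
  also have "word_equiv \<iota> \<dots> (t # B @ tb # (Z @ X) @ Y)"
    using word_equiv_swap_after_loop[of \<iota> t tb B Y "Z @ X"] assms by simp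
  also have "word_equiv \<iota> \<dots> (X @ Y @ (t # B @ [tb]) @ Z)"
    by (rule word_equiv_rotateI[where X="t # B @ tb # Z" and Y="X @ Y"]) auto
  finally show ?thesis .
qed

lemma word_equiv_slide_handle:
  assumes "\<iota> (\<iota> a) = a" "\<iota> (\<iota> b) = b"
  shows "word_equiv \<iota> ([a, b, \<iota> a, \<iota> b] @ X @ Y) (X @ [a, b, \<iota> a, \<iota> b] @ Y)"
proof -
  let ?ab = "\<iota> a" and ?bb = "\<iota> b"
  have "word_equiv \<iota> ([a, b, ?ab, ?bb] @ X @ Y) (a # [b] @ ?ab # Y @ (?bb # X))"
    using word_equiv_swap_after_loop[of \<iota> a ?ab "[b]" "?bb # X" Y] by simp
  also have "word_equiv \<iota> \<dots> (b # [?ab] @ Y @ ?bb # X @ [a])"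
    by (rule word_equiv_rotateI[where X="[a]" and Y="b # [?ab] @ Y @ ?bb # X"]) auto
  also have "word_equiv \<iota> \<dots> (b # Y @ [?ab] @ ?bb # X @ [a])"
    using word_equiv_swap_inside_loop[of \<iota> ?bb b "[?ab]" Y "X @ [a]"] assms by simp
  also have "word_equiv \<iota> \<dots> (a # [b] @ Y @ ?ab # ?bb # X)"
    by (rule word_equiv_rotateI[where X="b # Y @ [?ab] @ ?bb # X" and Y="[a]"]) auto
  also have "word_equiv \<iota> \<dots> (a # Y @ [b] @ ?ab # ?bb # X)"
    using word_equiv_swap_inside_loop[of \<iota> ?ab a "[b]" Y "?bb # X"] assms by simp
  also have "word_equiv \<iota> \<dots> (b # [?ab] @ ?bb # (X @ [a]) @ Y)"
    by (rule word_equiv_rotateI[where X="a # Y" and Y="b # [?ab] @ ?bb # X"]) auto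
  also have "word_equiv \<iota> \<dots> (b # [?ab] @ ?bb # Y @ (X @ [a]))"
    using word_equiv_swap_after_loop[of \<iota> b ?bb "[?ab]" "X @ [a]" Y] by simp
  also have "word_equiv \<iota> \<dots> (X @ [a, b, ?ab, ?bb] @ Y)"
    by (rule word_equiv_rotateI[where X="b # ?ab # ?bb # Y" and Y="X @ [a]"]) auto
  finally show ?thesis .
qed

definition movable :: "('f \<Rightarrow> 'f) \<Rightarrow> 'f list \<Rightarrow> bool" where
  "movable \<iota> p \<longleftrightarrow> (\<exists>t B. p = t # B @ [\<iota> t]) \<or>
     (\<exists>a b. p = [a, b, \<iota> a, \<iota> b] \<and> \<iota> (\<iota> a) = a \<and> \<iota> (\<iota> b) = b)"

lemma word_equiv_slide_movable:
  assumes "movable \<iota> p"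
  shows "word_equiv \<iota> (X @ p @ Y @ Z) (X @ Y @ p @ Z)"
  using assms unfolding movable_def
proof (elim disjE exE conjE)
  fix t B assume "p = t # B @ [\<iota> t]"
  then show ?thesis using word_equiv_slide_loop[of \<iota> t "\<iota> t" X B Y Z] by simp
next
  fix a b assume p: "p = [a, b, \<iota> a, \<iota> b]" and ab: "\<iota> (\<iota> a) = a" "\<iota> (\<iota> b) = b"
  have "word_equiv \<iota> (X @ p @ Y @ Z) (p @ Y @ Z @ X)"
    by (rule word_equiv_rotateI[where X=X and Y="p @ Y @ Z"]) auto
  also have "word_equiv \<iota> \<dots> (Y @ p @ Z @ X)"
    using word_equiv_slide_handle[OF ab, of Y "Z @ X"] p by simp
  also have "word_equiv \<iota> \<dots> (X @ Y @ p @ Z)"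
    by (rule word_equiv_rotateI[where X="Y @ p @ Z" and Y=X]) auto
  finally show ?thesis .
qed

lemma word_equiv_slide_movables:
  assumes "\<forall>p\<in>set ps. movable \<iota> p"
  shows "word_equiv \<iota> (X @ concat ps @ Y @ Z) (X @ Y @ concat ps @ Z)"
  using assms
proof (induction ps arbitrary: X)
  case Nil
  then show ?case by (simp add: word_equiv_refl)
next
  case (Cons p ps)
  have "word_equiv \<iota> ((X @ p) @ concat ps @ Y @ Z) ((X @ p) @ Y @ concat ps @ Z)"
    using Cons.IH[of "X @ p"] Cons.prems by simp
  also have "word_equiv \<iota> \<dots> (X @ Y @ p @ concat ps @ Z)"
    using word_equiv_slide_movable[of \<iota> p X Y "concat ps @ Z"] Cons.prems by simp
  finally show ?case by simp
qed

lemma word_equiv_append_movables: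
  assumes "word_equiv \<iota> w w'" "\<forall>p\<in>set ps. movable \<iota> p"
  shows "word_equiv \<iota> (w @ concat ps) (w' @ concat ps)"
  using assms(1)
proof (induction rule: word_equiv.induct)
  case (sym w w')
  then show ?case by (blast intro: word_equiv.sym)
next
  case (trans w w' w'')
  then show ?case by (blast intro: word_equiv.trans)
next
  case (rotate X Y)
  have "word_equiv \<iota> (X @ Y @ concat ps) (Y @ concat ps @ X)"
    by (rule word_equiv_rotateI[where X=X and Y="Y @ concat ps"]) auto
  also have "word_equiv \<iota> \<dots> (Y @ X @ concat ps)"
    using word_equiv_slide_movables[OF assms(2), of Y X "[]"] by simp
  finally show ?case by simp
next
  case (loop_move t tb A B C)
  then show ?case using word_equiv_slide_loop[of \<iota> t tb A B C "concat ps"] by simp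
qed

section \<open>Reduction to normal form\<close>

definition boundary_block :: "('f \<times> 'f) \<times> 'f list \<Rightarrow> 'f list" where
  "boundary_block = (\<lambda>((l, lb), Si). l # Si @ [lb])"

definition pair_block :: "'f \<times> 'f \<Rightarrow> 'f list" where
  "pair_block = (\<lambda>(e, eb). [e, eb])"

definition handle_block :: "'f \<times> 'f \<times> 'f \<times> 'f \<Rightarrow> 'f list" where
  "handle_block = (\<lambda>(a, b, ab, bb). [a, b, ab, bb])"

definition boundary_word :: "'f list list \<Rightarrow> ('f \<times> 'f) list \<Rightarrow> 'f list" where
  "boundary_word Ss ls = (case Ss of [] \<Rightarrow> [] | S1 # rest \<Rightarrow> S1 @ concat (map boundary_block (zip ls rest)))"

lemma nf_word_eq:
  "nf_word Ss ls es gs = boundary_word Ss ls @ concat (map pair_block es) @ concat (map handle_block gs)"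
  unfolding nf_word_def boundary_word_def boundary_block_def pair_block_def handle_block_def ..

text \<open>The conditions of \<open>is_normal_form\<close> other than distinctness of the word and the set of outer flags.\<close>

definition nf_data :: "('f \<Rightarrow> 'f) \<Rightarrow> 'f list list \<Rightarrow> ('f \<times> 'f) list \<Rightarrow> ('f \<times> 'f) list
                       \<Rightarrow> ('f \<times> 'f \<times> 'f \<times> 'f) list \<Rightarrow> bool" where
  "nf_data \<iota> Ss ls es gs \<longleftrightarrow>
     length ls = length Ss - 1 \<and> (\<forall>Si\<in>set Ss. Si \<noteq> []) \<and> sorted (map length Ss) \<and>
     (\<forall>x\<in>set (concat Ss). \<iota> x = x) \<and>
     (\<forall>(l, lb)\<in>set ls. \<iota> l = lb \<and> \<iota> lb = l) \<and>
     (\<forall>(e, eb)\<in>set es. \<iota> e = eb \<and> \<iota> eb = e) \<and>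
     (\<forall>(a, b, ab, bb)\<in>set gs. \<iota> a = ab \<and> \<iota> ab = a \<and> \<iota> b = bb \<and> \<iota> bb = b)"

lemma nf_data_movable:
  assumes "nf_data \<iota> Ss ls es gs"
  shows "\<forall>p\<in>set (map boundary_block (zip ls Ts)). movable \<iota> p"
    and "\<forall>p\<in>set (map pair_block es). movable \<iota> p"
    and "\<forall>p\<in>set (map handle_block gs). movable \<iota> p"
  using assms unfolding nf_data_def movable_def boundary_block_def pair_block_def handle_block_def
  by (fastforce dest: set_zip_leftD)+

lemma nf_append_trivial_loop:
  assumes "nf_data \<iota> Ss ls es gs" "\<iota> y = yb" "\<iota> yb = y"
  shows "nf_data \<iota> Ss ls (es @ [(y, yb)]) gs"
    and "word_equiv \<iota> (nf_word Ss ls es gs @ [y, yb]) (nf_word Ss ls (es @ [(y, yb)]) gs)"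
proof -
  show "nf_data \<iota> Ss ls (es @ [(y, yb)]) gs" using assms by (auto simp: nf_data_def)
  let ?E = "concat (map pair_block es)" and ?G = "concat (map handle_block gs)"
  have "word_equiv \<iota> ((boundary_word Ss ls @ ?E) @ [y, yb] @ ?G @ []) ((boundary_word Ss ls @ ?E) @ ?G @ [y, yb] @ [])"
    using word_equiv_slide_loop[of \<iota> y yb "boundary_word Ss ls @ ?E" "[]" ?G "[]"] assms(2)
    by simp
  then show "word_equiv \<iota> (nf_word Ss ls es gs @ [y, yb]) (nf_word Ss ls (es @ [(y, yb)]) gs)"
    by (auto simp: nf_word_eq pair_block_def intro: word_equiv.sym)
qed

lemma nf_append_first_boundary:
  assumes "nf_data \<iota> [] [] es gs" "\<iota> y = yb" "\<iota> yb = y" "B \<noteq> []" "\<forall>x\<in>set B. \<iota> x = x"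
  shows "nf_data \<iota> [B] [] ((yb, y) # es) gs"
    and "word_equiv \<iota> (nf_word [] [] es gs @ y # B @ [yb]) (nf_word [B] [] ((yb, y) # es) gs)"
proof -
  show "nf_data \<iota> [B] [] ((yb, y) # es) gs" using assms by (auto simp: nf_data_def)
  define ps where "ps = map pair_block es @ map handle_block gs"
  have ps: "\<forall>p\<in>set ps. movable \<iota> p" using nf_data_movable[OF assms(1)] by (auto simp: ps_def)
  have "word_equiv \<iota> (concat ps @ y # B @ [yb]) ([y] @ (B @ [yb]) @ concat ps)"
    by (rule word_equiv_rotateI[where X="concat ps" and Y="y # B @ [yb]"]) auto
  also have "word_equiv \<iota> \<dots> ([y] @ concat ps @ (B @ [yb]))"
    using word_equiv.sym[OF word_equiv_slide_movables[OF ps, of "[y]" "B @ [yb]" "[]"]] by simp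
  also have "word_equiv \<iota> \<dots> (B @ [yb] @ [y] @ concat ps)"
    by (rule word_equiv_rotateI[where X="y # concat ps" and Y="B @ [yb]"]) auto
  finally show "word_equiv \<iota> (nf_word [] [] es gs @ y # B @ [yb]) (nf_word [B] [] ((yb, y) # es) gs)"
    by (simp add: nf_word_eq boundary_word_def pair_block_def ps_def)
qed

lemma nf_append_smallest_boundary:
  assumes "nf_data \<iota> (S1 # rest) ls es gs" "\<iota> y = yb" "\<iota> yb = y" "B \<noteq> []"
    "\<forall>x\<in>set B. \<iota> x = x" "length B < length S1"
  shows "nf_data \<iota> (B # S1 # rest) ((yb, y) # ls) es gs"
    and "word_equiv \<iota> (nf_word (S1 # rest) ls es gs @ y # B @ [yb])
           (nf_word (B # S1 # rest) ((yb, y) # ls) es gs)"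
proof -
  show "nf_data \<iota> (B # S1 # rest) ((yb, y) # ls) es gs"
    using assms by (auto simp: nf_data_def)
  define ps where "ps = map boundary_block (zip ls rest) @ map pair_block es @ map handle_block gs"
  have ps: "\<forall>p\<in>set ps. movable \<iota> p" using nf_data_movable[OF assms(1)] by (auto simp: ps_def)
  have "word_equiv \<iota> (S1 @ concat ps @ y # B @ [yb]) (y # B @ yb # S1 @ concat ps)"
    by (rule word_equiv_rotateI[where X="S1 @ concat ps" and Y="y # B @ [yb]"]) auto
  also have "word_equiv \<iota> \<dots> (y # B @ yb # concat ps @ S1)"
    using word_equiv_swap_after_loop[of \<iota> y yb B S1 "concat ps"] assms(2) by simp
  also have "word_equiv \<iota> \<dots> ([y] @ concat ps @ (B @ [yb]) @ S1)"
    using word_equiv.sym[OF word_equiv_slide_movables[OF ps, of "[y]" "B @ [yb]" S1]] by simp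
  also have "word_equiv \<iota> \<dots> (B @ [yb] @ S1 @ [y] @ concat ps)"
    by (rule word_equiv_rotateI[where X="y # concat ps" and Y="B @ yb # S1"]) auto
  finally show "word_equiv \<iota> (nf_word (S1 # rest) ls es gs @ y # B @ [yb])
      (nf_word (B # S1 # rest) ((yb, y) # ls) es gs)"
    by (simp add: nf_word_eq boundary_word_def boundary_block_def ps_def)
qed

lemma nf_append_inner_boundary:
  assumes "nf_data \<iota> (S1 # R1 @ R2) (ls1 @ ls2) es gs" "length ls1 = length R1"
    "\<iota> y = yb" "\<iota> yb = y" "B \<noteq> []" "\<forall>x\<in>set B. \<iota> x = x" "length S1 \<le> length B"
    "\<forall>S\<in>set R1. length S \<le> length B" "\<forall>S\<in>set R2. length B \<le> length S"
  shows "nf_data \<iota> (S1 # R1 @ B # R2) (ls1 @ (y, yb) # ls2) es gs"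
    and "word_equiv \<iota> (nf_word (S1 # R1 @ R2) (ls1 @ ls2) es gs @ y # B @ [yb])
           (nf_word (S1 # R1 @ B # R2) (ls1 @ (y, yb) # ls2) es gs)"
proof -
  have "sorted (map length (S1 # R1 @ B # R2))"
    using assms(1,7,8,9) by (auto simp: nf_data_def sorted_append)
  then show "nf_data \<iota> (S1 # R1 @ B # R2) (ls1 @ (y, yb) # ls2) es gs"
    using assms(1-6) by (auto simp: nf_data_def)
  define X where "X = S1 @ concat (map boundary_block (zip ls1 R1))"
  define Y where "Y = concat (map boundary_block (zip ls2 R2)) @ concat (map pair_block es)
    @ concat (map handle_block gs)"
  have "word_equiv \<iota> (X @ (y # B @ [yb]) @ Y @ []) (X @ Y @ (y # B @ [yb]) @ [])"
    using word_equiv_slide_loop[of \<iota> y yb X B Y "[]"] assms(3) by simp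
  then show "word_equiv \<iota> (nf_word (S1 # R1 @ R2) (ls1 @ ls2) es gs @ y # B @ [yb])
      (nf_word (S1 # R1 @ B # R2) (ls1 @ (y, yb) # ls2) es gs)"
    using assms(2) by (auto simp: nf_word_eq boundary_word_def boundary_block_def X_def Y_def
        intro: word_equiv.sym)
qed

lemma nf_word_append_boundary:
  assumes nf: "nf_data \<iota> Ss ls es gs" and y: "\<iota> y = yb" "\<iota> yb = y" and B: "\<forall>x\<in>set B. \<iota> x = x"
  shows "\<exists>Ss' ls' es' gs'. nf_data \<iota> Ss' ls' es' gs' \<and> set (concat Ss') = set (concat Ss) \<union> set B \<and>
           word_equiv \<iota> (nf_word Ss ls es gs @ y # B @ [yb]) (nf_word Ss' ls' es' gs')"
proof -
  consider (loop) "B = []" | (first) "B \<noteq> []" "Ss = []"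
    | (smallest) S1 rest where "B \<noteq> []" "Ss = S1 # rest" "length B < length S1"
    | (inner) S1 rest where "B \<noteq> []" "Ss = S1 # rest" "length S1 \<le> length B"
    by (cases Ss) (auto, metis not_le)
  then show ?thesis
  proof cases
    case loop
    then show ?thesis using nf_append_trivial_loop[OF nf y]
      by (intro exI[of _ Ss] exI[of _ ls] exI[of _ "es @ [(y, yb)]"] exI[of _ gs]) simp
  next
    case first
    then have "ls = []" using nf by (simp add: nf_data_def)
    then show ?thesis using nf_append_first_boundary[of \<iota> es gs y yb B] nf y B first
      by (intro exI[of _ "[B]"] exI[of _ "[]"] exI[of _ "(yb, y) # es"] exI[of _ gs]) simp
  next
    case smallest
    then show ?thesis using nf_append_smallest_boundary[of \<iota> S1 rest ls es gs y yb B] nf y B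
      by (intro exI[of _ "B # S1 # rest"] exI[of _ "(yb, y) # ls"] exI[of _ es] exI[of _ gs]) auto
  next
    case inner
    define R1 where "R1 = takeWhile (\<lambda>S. length S \<le> length B) rest"
    define R2 where "R2 = dropWhile (\<lambda>S. length S \<le> length B) rest"
    define ls1 where "ls1 = take (length R1) ls"
    define ls2 where "ls2 = drop (length R1) ls"
    have rest: "rest = R1 @ R2" and ls: "ls = ls1 @ ls2" by (simp_all add: R1_def R2_def ls1_def ls2_def)
    have "length ls = length rest" using nf inner by (simp add: nf_data_def)
    then have len: "length ls1 = length R1" using rest by (simp add: ls1_def)
    have R1: "\<forall>S\<in>set R1. length S \<le> length B" by (auto simp: R1_def dest: set_takeWhileD)
    have R2: "\<forall>S\<in>set R2. length B \<le> length S"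
    proof (cases R2)
      case (Cons r R2')
      have "\<not> length r \<le> length B" using Cons by (simp add: R2_def dropWhile_eq_Cons_conv)
      then have "length B < length r" by simp
      moreover have "sorted (map length R2)" using nf inner rest by (simp add: nf_data_def sorted_append)
      ultimately show ?thesis using Cons by auto
    qed simp
    have "nf_data \<iota> (S1 # R1 @ R2) (ls1 @ ls2) es gs" using nf inner rest ls by simp
    from nf_append_inner_boundary[OF this len y(1,2) inner(1) B inner(3) R1 R2]
    show ?thesis using inner rest ls
      by (intro exI[of _ "S1 # R1 @ B # R2"] exI[of _ "ls1 @ (y, yb) # ls2"] exI[of _ es] exI[of _ gs]) auto
  qed
qed

definition reduces_to_nf :: "('f \<Rightarrow> 'f) \<Rightarrow> 'f list \<Rightarrow> bool" where
  "reduces_to_nf \<iota> W \<longleftrightarrow> (\<exists>Ss ls es gs. nf_data \<iota> Ss ls es gs \<and>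
     set (concat Ss) = outer_letters \<iota> W \<and> word_equiv \<iota> W (nf_word Ss ls es gs))"

lemma reduces_to_nf_word_equiv:
  assumes "word_equiv \<iota> W W'" "reduces_to_nf \<iota> W'"
  shows "reduces_to_nf \<iota> W"
proof -
  have "outer_letters \<iota> W = outer_letters \<iota> W'"
    using word_equiv_set_length_distinct[OF assms(1)] by (simp add: outer_letters_def)
  then show ?thesis using assms unfolding reduces_to_nf_def by (metis word_equiv.trans)
qed

lemma reduces_to_nf_outer:
  assumes "\<forall>x\<in>set W. \<iota> x = x"
  shows "reduces_to_nf \<iota> W"
proof (cases "W = []")
  case True
  then have "nf_data \<iota> [] [] [] [] \<and> set (concat []) = outer_letters \<iota> W \<and> word_equiv \<iota> W (nf_word [] [] [] [])"
    by (simp add: nf_data_def outer_letters_def nf_word_def word_equiv_refl)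
  then show ?thesis unfolding reduces_to_nf_def by blast
next
  case False
  then have "nf_data \<iota> [W] [] [] [] \<and> set (concat [W]) = outer_letters \<iota> W \<and> word_equiv \<iota> W (nf_word [W] [] [] [])"
    using assms by (auto simp: nf_data_def outer_letters_def nf_word_def word_equiv_refl)
  then show ?thesis unfolding reduces_to_nf_def by blast
qed

lemma reduces_to_nf_append_handle:
  assumes "reduces_to_nf \<iota> W" "\<iota> (\<iota> a) = a" "\<iota> (\<iota> b) = b" "\<iota> a \<noteq> a" "\<iota> b \<noteq> b"
  shows "reduces_to_nf \<iota> (W @ [a, b, \<iota> a, \<iota> b])"
proof -
  obtain Ss ls es gs where nf: "nf_data \<iota> Ss ls es gs" "set (concat Ss) = outer_letters \<iota> W"
    and W: "word_equiv \<iota> W (nf_word Ss ls es gs)" using assms(1) by (auto simp: reduces_to_nf_def)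
  have "\<forall>p\<in>set [[a, b, \<iota> a, \<iota> b]]. movable \<iota> p" using assms(2,3) by (auto simp: movable_def)
  from word_equiv_append_movables[OF W this]
  have "word_equiv \<iota> (W @ [a, b, \<iota> a, \<iota> b]) (nf_word Ss ls es (gs @ [(a, b, \<iota> a, \<iota> b)]))"
    by (simp add: nf_word_eq handle_block_def)
  moreover have "nf_data \<iota> Ss ls es (gs @ [(a, b, \<iota> a, \<iota> b)])" using nf(1) assms(2,3) by (auto simp: nf_data_def)
  moreover have "outer_letters \<iota> (W @ [a, b, \<iota> a, \<iota> b]) = outer_letters \<iota> W"
    using assms(2-5) by (auto simp: outer_letters_def)
  ultimately show ?thesis using nf(2) unfolding reduces_to_nf_def by metis
qed

lemma reduces_to_nf_append_boundary:
  assumes "reduces_to_nf \<iota> W" "\<iota> y = yb" "\<iota> yb = y" "y \<noteq> yb" "\<forall>x\<in>set B. \<iota> x = x"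
  shows "reduces_to_nf \<iota> (W @ y # B @ [yb])"
proof -
  obtain Ss ls es gs where nf: "nf_data \<iota> Ss ls es gs" "set (concat Ss) = outer_letters \<iota> W"
    and W: "word_equiv \<iota> W (nf_word Ss ls es gs)" using assms(1) by (auto simp: reduces_to_nf_def)
  have "\<forall>p\<in>set [y # B @ [yb]]. movable \<iota> p" using assms(2) by (auto simp: movable_def)
  from word_equiv_append_movables[OF W this]
  have W': "word_equiv \<iota> (W @ y # B @ [yb]) (nf_word Ss ls es gs @ y # B @ [yb])" by simp
  obtain Ss' ls' es' gs' where nf': "nf_data \<iota> Ss' ls' es' gs'"
    "set (concat Ss') = set (concat Ss) \<union> set B"
    "word_equiv \<iota> (nf_word Ss ls es gs @ y # B @ [yb]) (nf_word Ss' ls' es' gs')"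
    using nf_word_append_boundary[OF nf(1) assms(2,3,5)] by blast
  have "outer_letters \<iota> (W @ y # B @ [yb]) = outer_letters \<iota> W \<union> set B"
    using assms(2-5) by (auto simp: outer_letters_def)
  then show ?thesis
    using nf(2) nf' word_equiv.trans[OF W' nf'(3)] unfolding reduces_to_nf_def by metis
qed

lemma wf_word_prefix:
  assumes w: "wf_word \<iota> W" and equiv: "word_equiv \<iota> W (W' @ R)" and R: "\<forall>x\<in>set R. \<iota> x \<in> set R"
  shows "wf_word \<iota> W'"
proof (rule wf_word_drop_closed[OF w _ _ R])
  show "set W = set W' \<union> set R" "distinct (W' @ R)"
    using word_equiv_set_length_distinct[OF equiv] w by (auto simp: wf_word_def)
qed

lemma loop_split:
  assumes "x \<in> set L" "\<iota> x \<in> set L" "\<iota> x \<noteq> x" "\<iota> (\<iota> x) = x"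
  shows "\<exists>A y B C. L = A @ y # B @ \<iota> y # C \<and> \<iota> y \<noteq> y"
proof -
  obtain A R where L: "L = A @ x # R" using assms(1) by (meson split_list)
  then consider "\<iota> x \<in> set R" | "\<iota> x \<in> set A" using assms(2,3) by auto
  then show ?thesis
  proof cases
    case 1
    then obtain R1 R2 where "R = R1 @ \<iota> x # R2" by (meson split_list)
    then show ?thesis using L assms(3) by blast
  next
    case 2
    then obtain A1 A2 where "A = A1 @ \<iota> x # A2" by (meson split_list)
    then have "L = A1 @ \<iota> x # A2 @ \<iota> (\<iota> x) # R" using L assms(4) by simp
    then show ?thesis using assms(3,4) by metis
  qed
qed

lemma innermost_loop:
  assumes "wf_word \<iota> W" "\<exists>x\<in>set W. \<iota> x \<noteq> x"
  shows "\<exists>A y B C. W = A @ y # B @ \<iota> y # C \<and> \<iota> y \<noteq> y \<and> (\<forall>z\<in>set B. \<iota> z \<noteq> z \<longrightarrow> \<iota> z \<notin> set B)"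
proof -
  have inv: "\<iota> x \<in> set W \<and> \<iota> (\<iota> x) = x" if "x \<in> set W" for x
    using assms(1) that by (simp add: wf_word_def)
  define P where "P d \<longleftrightarrow> (\<exists>A y B C. W = A @ y # B @ \<iota> y # C \<and> \<iota> y \<noteq> y \<and> length B = d)" for d
  have "\<exists>d. P d" using loop_split[of _ W \<iota>] assms(2) inv unfolding P_def by metis
  then obtain d where "P d" and least: "\<And>d'. d' < d \<Longrightarrow> \<not> P d'" by (metis exists_least_iff)
  then obtain A y B C where W: "W = A @ y # B @ \<iota> y # C" "\<iota> y \<noteq> y" "length B = d"
    unfolding P_def by blast
  have "\<iota> z \<notin> set B" if z: "z \<in> set B" "\<iota> z \<noteq> z" for z
  proof
    assume "\<iota> z \<in> set B"
    moreover have "\<iota> (\<iota> z) = z" using inv W(1) z(1) by auto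
    ultimately obtain A' y' B' C' where "B = A' @ y' # B' @ \<iota> y' # C'" "\<iota> y' \<noteq> y'"
      using loop_split[of z B \<iota>] z by blast
    then have "P (length B')" unfolding P_def W(1)
      by (intro exI[of _ "A @ y # A'"] exI[of _ y'] exI[of _ B'] exI[of _ "C' @ \<iota> y # C"]) simp
    moreover have "length B' < d" using W(3) \<open>B = _\<close> by simp
    ultimately show False using least by blast
  qed
  then show ?thesis using W by blast
qed

lemma handle_extraction:
  assumes w: "wf_word \<iota> W" and W: "W = A @ y # B @ \<iota> y # C"
    and z: "z \<in> set B" "\<iota> z \<notin> set B" "\<iota> z \<noteq> z"
  shows "\<exists>W'. word_equiv \<iota> W (W' @ [y, z, \<iota> y, \<iota> z]) \<and> length W' < length W"
proof -
  let ?yb = "\<iota> y" and ?zb = "\<iota> z"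
  have inv: "\<iota> x \<in> set W" "\<iota> (\<iota> x) = x" if "x \<in> set W" for x
    using w that by (auto simp: wf_word_def)
  have y: "\<iota> ?yb = y" and zz: "\<iota> ?zb = z" using inv W z(1) by auto
  have "y \<notin> set B" "?yb \<notin> set B" using w W by (auto simp: wf_word_def)
  then have "?zb \<noteq> y" "?zb \<noteq> ?yb" using y zz z(1) by metis+
  then have "?zb \<in> set (C @ A)" using inv[of z] z W by auto
  then obtain D1 D2 where CA: "C @ A = D1 @ ?zb # D2" by (meson split_list)
  obtain B1 B2 where B: "B = B1 @ z # B2" using z(1) by (meson split_list)
  have "word_equiv \<iota> W (y # B @ ?yb # (C @ A))"
    by (rule word_equiv_rotateI[where X=A and Y="y # B @ ?yb # C"]) (auto simp: W)
  also have "y # B @ ?yb # (C @ A) = y # B @ ?yb # D1 @ (?zb # D2)" using CA by simp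
  also have "word_equiv \<iota> \<dots> (y # B @ ?yb # (?zb # D2) @ D1)"
    using word_equiv_swap_after_loop[of \<iota> y ?yb B D1 "?zb # D2"] by simp
  also have "\<dots> = y # B1 @ (z # B2) @ ?yb # (?zb # D2 @ D1)" using B by simp
  also have "word_equiv \<iota> \<dots> (y # (z # B2) @ B1 @ ?yb # (?zb # D2 @ D1))"
    using word_equiv_swap_inside_loop[of \<iota> ?yb y B1 "z # B2" "?zb # D2 @ D1"] y by simp
  also have "word_equiv \<iota> \<dots> (z # (B2 @ B1) @ [?yb] @ ?zb # (D2 @ D1 @ [y]))"
    by (rule word_equiv_rotateI[where X="[y]" and Y="z # B2 @ B1 @ ?yb # ?zb # D2 @ D1"]) auto
  also have "word_equiv \<iota> \<dots> (z # [?yb] @ (B2 @ B1) @ ?zb # (D2 @ D1 @ [y]))"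
    using word_equiv_swap_inside_loop[of \<iota> ?zb z "B2 @ B1" "[?yb]" "D2 @ D1 @ [y]"] zz by simp
  also have "word_equiv \<iota> \<dots> (y # [z] @ ?yb # (B2 @ B1) @ (?zb # D2 @ D1))"
    by (rule word_equiv_rotateI[where X="z # ?yb # B2 @ B1 @ ?zb # D2 @ D1" and Y="[y]"]) auto
  also have "word_equiv \<iota> \<dots> (y # [z] @ ?yb # (?zb # D2 @ D1) @ (B2 @ B1))"
    using word_equiv_swap_after_loop[of \<iota> y ?yb "[z]" "B2 @ B1" "?zb # D2 @ D1"] by simp
  also have "word_equiv \<iota> \<dots> ((D2 @ D1 @ B2 @ B1) @ [y, z, ?yb, ?zb])"
    by (rule word_equiv_rotateI[where X="[y, z, ?yb, ?zb]" and Y="D2 @ D1 @ B2 @ B1"]) auto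
  finally have equiv: "word_equiv \<iota> W ((D2 @ D1 @ B2 @ B1) @ [y, z, ?yb, ?zb])" .
  then show ?thesis using word_equiv_set_length_distinct[OF equiv]
    by (intro exI[of _ "D2 @ D1 @ B2 @ B1"]) simp
qed

lemma reduces_to_nf_if_wf_word: "wf_word \<iota> W \<Longrightarrow> reduces_to_nf \<iota> W"
proof (induction "length W" arbitrary: W rule: less_induct)
  case less
  show ?case
  proof (cases "\<exists>x\<in>set W. \<iota> x \<noteq> x")
    case False
    then show ?thesis by (simp add: reduces_to_nf_outer)
  next
    case True
    then obtain A y B C where W: "W = A @ y # B @ \<iota> y # C" "\<iota> y \<noteq> y"
      and inner: "\<forall>z\<in>set B. \<iota> z \<noteq> z \<longrightarrow> \<iota> z \<notin> set B"
      using innermost_loop[OF less.prems] by blast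
    have y: "\<iota> (\<iota> y) = y" using less.prems W(1) by (simp add: wf_word_def)
    show ?thesis
    proof (cases "\<exists>z\<in>set B. \<iota> z \<noteq> z")
      case True
      then obtain z where z: "z \<in> set B" "\<iota> z \<noteq> z" by blast
      then have "\<iota> z \<notin> set B" using inner by blast
      then obtain W' where W': "word_equiv \<iota> W (W' @ [y, z, \<iota> y, \<iota> z])" "length W' < length W"
        using handle_extraction[OF less.prems W(1) z(1) _ z(2)] by blast
      have zz: "\<iota> (\<iota> z) = z" using less.prems z(1) W(1) by (simp add: wf_word_def)
      have "wf_word \<iota> W'" by (rule wf_word_prefix[OF less.prems W'(1)]) (use y zz in auto)
      then have "reduces_to_nf \<iota> W'" using less.hyps W'(2) by blast
      then have "reduces_to_nf \<iota> (W' @ [y, z, \<iota> y, \<iota> z])"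
        using y zz W(2) z(2) by (rule reduces_to_nf_append_handle)
      then show ?thesis by (rule reduces_to_nf_word_equiv[OF W'(1)])
    next
      case False
      have W': "word_equiv \<iota> W ((C @ A) @ y # B @ [\<iota> y])"
        by (rule word_equiv_rotateI[where X="A @ y # B @ [\<iota> y]" and Y=C]) (simp_all add: W)
      have "wf_word \<iota> (C @ A)" by (rule wf_word_prefix[OF less.prems W']) (use False y in auto)
      then have "reduces_to_nf \<iota> (C @ A)" using less.hyps W(1) by simp
      then have "reduces_to_nf \<iota> ((C @ A) @ y # B @ [\<iota> y])"
        by (rule reduces_to_nf_append_boundary) (use y W(2) False in auto)
      then show ?thesis by (rule reduces_to_nf_word_equiv[OF W'])
    qed
  qed
qed

section \<open>One-vertex ribbon graphs\<close>

lemma funpow_cancel_bij_betw: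
  assumes bij: "bij_betw c F F" and "x \<in> F" "i \<le> j" "(c ^^ i) x = (c ^^ j) x"
  shows "(c ^^ (j - i)) x = x"
proof -
  have "(c ^^ i) ((c ^^ (j - i)) x) = (c ^^ (i + (j - i))) x" by (simp add: funpow_add)
  also have "\<dots> = (c ^^ i) x" using assms(3,4) by simp
  finally show ?thesis
    using inj_onD[OF bij_betw_imp_inj_on[OF bij_betw_funpow[OF bij]]] bij_betw_funpow[OF bij] \<open>x \<in> F\<close>
    by (meson bij_betwE)
qed

lemma card_le_period:
  assumes reach: "\<forall>y\<in>F. \<exists>m. (c ^^ m) x = y" and period: "(c ^^ d) x = x" and "0 < d"
  shows "card F \<le> d"
proof -
  have "F \<subseteq> (\<lambda>r. (c ^^ r) x) ` {..<d}"
  proof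
    fix y assume "y \<in> F"
    then obtain m where "(c ^^ m) x = y" using reach by blast
    then have "y = (c ^^ (m mod d)) x" using funpow_mod_eq[OF period] by simp
    moreover have "m mod d < d" using \<open>0 < d\<close> by simp
    ultimately show "y \<in> (\<lambda>r. (c ^^ r) x) ` {..<d}" by blast
  qed
  then have "card F \<le> card ((\<lambda>r. (c ^^ r) x) ` {..<d})" by (simp add: card_mono)
  also have "\<dots> \<le> d" using card_image_le[of "{..<d}" "\<lambda>r. (c ^^ r) x"] by simp
  finally show ?thesis .
qed

definition orbit_word :: "('a \<Rightarrow> 'a) \<Rightarrow> 'a \<Rightarrow> nat \<Rightarrow> 'a list" where
  "orbit_word c x n = map (\<lambda>i. (c ^^ i) x) [0..<n]"

lemma orbit_word_enumerates:
  assumes fin: "finite F" and bij: "bij_betw c F F" and x: "x \<in> F"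
    and reach: "\<forall>y\<in>F. \<exists>m. (c ^^ m) x = y"
  shows "distinct (orbit_word c x (card F))" and "set (orbit_word c x (card F)) = F"
proof -
  let ?w = "orbit_word c x (card F)"
  have in_F: "(c ^^ m) x \<in> F" for m using bij_betw_funpow[OF bij] x by (meson bij_betwE)
  show dist: "distinct ?w"
    unfolding distinct_conv_nth
  proof (intro allI impI)
    fix i j assume "i < length ?w" "j < length ?w" "i \<noteq> j"
    moreover have "(c ^^ d) x \<noteq> x" if "0 < d" "d < card F" for d
      using card_le_period[OF reach _ \<open>0 < d\<close>] \<open>d < card F\<close> by auto
    ultimately show "?w ! i \<noteq> ?w ! j"
      using funpow_cancel_bij_betw[OF bij x, of i j] funpow_cancel_bij_betw[OF bij x, of j i]
      by (cases "i < j") (auto simp: orbit_word_def)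
  qed
  show "set ?w = F"
  proof (rule card_subset_eq[OF fin])
    show "set ?w \<subseteq> F" using in_F by (auto simp: orbit_word_def)
    show "card (set ?w) = card F" using distinct_card[OF dist] by (simp add: orbit_word_def)
  qed
qed

lemma cyc_of_word_orbit_word:
  assumes fin: "finite F" and bij: "bij_betw c F F" and x: "x \<in> F"
    and reach: "\<forall>y\<in>F. \<exists>m. (c ^^ m) x = y" and y: "y \<in> F"
  shows "c y = cyc_of_word (orbit_word c x (card F)) y"
proof -
  define n where "n = card F"
  define w where "w = orbit_word c x n"
  have dist: "distinct w" and set_w: "set w = F"
    using orbit_word_enumerates[OF fin bij x reach] by (simp_all add: w_def n_def)
  have w_nth: "w ! i = (c ^^ i) x" if "i < n" for i using that by (simp add: w_def orbit_word_def)
  obtain i where i: "i < n" "y = w ! i" using y set_w by (auto simp: in_set_conv_nth w_def orbit_word_def)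
  have cy: "c y = (c ^^ Suc i) x" using i w_nth by simp
  have word: "cyc_of_word w y = w ! (Suc i mod n)"
    using cyc_of_word_nth[OF dist, of i] i by (simp add: w_def orbit_word_def)
  show ?thesis
  proof (cases "Suc i < n")
    case True
    then show ?thesis using cy word w_nth by (simp add: w_def n_def)
  next
    case False
    then have n: "Suc i = n" using i by simp
    obtain k where k: "k < n" "c y = (c ^^ k) x"
      using cy set_w bij_betw_funpow[OF bij, of "Suc i"] x by (force simp: w_def orbit_word_def dest: bij_betwE)
    have "(c ^^ (n - k)) x = x" using funpow_cancel_bij_betw[OF bij x, of k n] k cy n by simp
    then have "k = 0" using card_le_period[OF reach _, of "n - k"] k by (cases "k = 0") (auto simp: n_def)
    then show ?thesis using k word n w_nth by (simp add: w_def n_def)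
  qed
qed

lemma ribbon_graph_one_vertex_word:
  assumes rg: "ribbon_graph G" and V: "verts G = {v}"
  shows "\<exists>w. distinct w \<and> set w = flags G \<and> (\<forall>x\<in>flags G. cyc G x = cyc_of_word w x)"
proof (cases "flags G = {}")
  case True
  then show ?thesis by (intro exI[of _ "[]"]) simp
next
  case False
  then obtain x where x: "x \<in> flags G" by blast
  have "finite (flags G)" "bij_betw (cyc G) (flags G) (flags G)"
    "\<forall>y\<in>flags G. \<exists>m. (cyc G ^^ m) x = y"
    using rg V x by (simp_all add: ribbon_graph_def)
  from orbit_word_enumerates[OF this(1,2) x this(3)] cyc_of_word_orbit_word[OF this(1,2) x this(3)]
  show ?thesis by blast
qed

lemma RI_connected_one_vertex_word_graph:
  assumes G: "RI_obj S G" and V: "verts G = {v}"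
  obtains w where "wf_word (inv G) w" "outer_letters (inv G) w = S"
    "RI_connected S G (word_graph v w (inv G))"
proof -
  have rg: "ribbon_graph G" and S: "outer_flags G = S" using G by (auto simp: RI_obj_def)
  obtain w where w: "distinct w" "set w = flags G" "\<forall>x\<in>flags G. cyc G x = cyc_of_word w x"
    using ribbon_graph_one_vertex_word[OF rg V] by blast
  have wf: "wf_word (inv G) w" using rg w by (auto simp: wf_word_def ribbon_graph_def)
  have outer: "outer_letters (inv G) w = S" using S w by (auto simp: outer_letters_def outer_flags_def)
  have "rg_iso S G (word_graph v w (inv G)) id (\<lambda>_. v)"
    using rg w V by (auto simp: rg_iso_def word_graph_def ribbon_graph_def)
  moreover have "RI_obj S (word_graph v w (inv G))" using RI_obj_word_graph[OF wf] outer by simp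
  ultimately have "RI_connected S G (word_graph v w (inv G))" using RI_connected_iso[OF G] by blast
  then show thesis using that wf outer by blast
qed

lemma is_normal_form_word_graph:
  assumes "nf_data \<iota> Ss ls es gs" "distinct (nf_word Ss ls es gs)"
  shows "is_normal_form (set (concat Ss)) v (word_graph v (nf_word Ss ls es gs) \<iota>)"
  unfolding is_normal_form_def
  by (intro exI[of _ Ss] exI[of _ ls] exI[of _ es] exI[of _ gs] exI[of _ \<iota>])
    (use assms in \<open>simp add: nf_data_def\<close>)

lemma RI_connected_word_graph_normal_form:
  assumes "infinite (UNIV :: 'f set)" "v' \<noteq> v" "wf_word \<iota> w"
  obtains H where "is_normal_form (outer_letters \<iota> w) v H"
    "RI_connected (outer_letters \<iota> w) (word_graph v w (\<iota> :: 'f \<Rightarrow> 'f)) H"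
proof -
  obtain Ss ls es gs where nf: "nf_data \<iota> Ss ls es gs" "set (concat Ss) = outer_letters \<iota> w"
    and equiv: "word_equiv \<iota> w (nf_word Ss ls es gs)"
    using reduces_to_nf_if_wf_word[OF assms(3)] by (auto simp: reduces_to_nf_def)
  have "distinct (nf_word Ss ls es gs)"
    using word_equiv_set_length_distinct[OF equiv] assms(3) by (simp add: wf_word_def)
  from is_normal_form_word_graph[OF nf(1) this, of v] nf(2)
  have "is_normal_form (outer_letters \<iota> w) v (word_graph v (nf_word Ss ls es gs) \<iota>)" by simp
  with that RI_connected_word_equiv[OF assms(1,2) equiv assms(3)] show thesis by blast
qed

theorem corollary5p11:
  fixes dummy_f :: 'f and dummy_v :: 'v
  assumes "infinite (UNIV :: 'f set)" and "infinite (UNIV :: 'v set)"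
  shows
    "(\<forall>(A :: 'f list) B C t tb (\<iota> :: 'f \<Rightarrow> 'f) (v :: 'v).
        distinct (A @ [t] @ B @ [tb] @ C) \<and>
        (\<forall>x\<in>set (A @ [t] @ B @ [tb] @ C).
            \<iota> x \<in> set (A @ [t] @ B @ [tb] @ C) \<and> \<iota> (\<iota> x) = x) \<and>
        \<iota> t = tb
        \<longrightarrow> RI_connected {x \<in> set (A @ [t] @ B @ [tb] @ C). \<iota> x = x}
              (word_graph v (A @ [t] @ B @ [tb] @ C) \<iota>)
              (word_graph v (A @ C @ [t] @ B @ [tb]) \<iota>))
     \<and>
     (\<forall>(S :: 'f set) (G :: ('f, 'v) rgraph).
        RI_obj S G \<and> card (verts G) = 1
        \<longrightarrow> (\<exists>v H. is_normal_form S v H \<and> RI_connected S G H))"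
proof (intro conjI allI impI)
  fix A B C t tb and \<iota> :: "'f \<Rightarrow> 'f" and v :: 'v
  obtain v' where "v' \<noteq> v" using ex_new_if_finite[OF assms(2), of "{v}"] by auto
  assume "distinct (A @ [t] @ B @ [tb] @ C) \<and>
    (\<forall>x\<in>set (A @ [t] @ B @ [tb] @ C). \<iota> x \<in> set (A @ [t] @ B @ [tb] @ C) \<and> \<iota> (\<iota> x) = x) \<and> \<iota> t = tb"
  then have "wf_word \<iota> (A @ [t] @ B @ [tb] @ C) \<and> \<iota> t = tb"
    unfolding wf_word_def by (elim conjE) (intro conjI)
  from RI_connected_loop_move[OF assms(1) \<open>v' \<noteq> v\<close>] this
  show "RI_connected {x \<in> set (A @ [t] @ B @ [tb] @ C). \<iota> x = x}
      (word_graph v (A @ [t] @ B @ [tb] @ C) \<iota>) (word_graph v (A @ C @ [t] @ B @ [tb]) \<iota>)"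
    by (simp add: outer_letters_def)
next
  fix S and G :: "('f, 'v) rgraph"
  assume "RI_obj S G \<and> card (verts G) = 1"
  then have G: "RI_obj S G" and card: "card (verts G) = 1" by simp_all
  from card obtain v where "verts G = {v}" by (rule card_1_singletonE)
  with G obtain w where w: "wf_word (inv G) w" "outer_letters (inv G) w = S"
    and G_w: "RI_connected S G (word_graph v w (inv G))"
    by (rule RI_connected_one_vertex_word_graph)
  obtain v' where "v' \<noteq> v" using ex_new_if_finite[OF assms(2), of "{v}"] by auto
  from RI_connected_word_graph_normal_form[OF assms(1) this w(1)] obtain H
    where "is_normal_form S v H" "RI_connected S (word_graph v w (inv G)) H" unfolding w(2) .
  then show "\<exists>v H. is_normal_form S v H \<and> RI_connected S G H" using RI_connected_trans[OF G_w] by blast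
qed

end
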